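(* Let $-\infty<a<b<\infty$, let $y:[a,b]\to\mathbb{R}$ be $L$-Lipschitz, and let $\gamma(t)=t+iy(t)$. Suppose $z_i\in\mathbb{C}$ and $\beta_i>0$ for $i=1,\dots,m$, with $\sum_{i=1}^m\beta_i=\beta<1$. Then $$\int_a^b\prod_{i=1}^m\left(\frac{1}{|\gamma(t)-z_i|}\right)^{\beta_i}|\gamma'(t)|\,dt<\mathrm{Const}_{L,a,b,\beta},$$ where $\mathrm{Const}_{L,a,b,\beta}$ is a constant depending only on $L,a,b,\beta$.
   Context: $|\gamma'(t)|=\sqrt{1+y'(t)^2}$, defined for almost every $t$. A function $y$ is $L$-Lipschitz if $|y(t_1)-y(t_2)|\le L|t_1-t_2|$ for all $t_1,t_2$. *)

theory Defs
  imports "HOL-Analysis.Analysis"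
begin

end

theory Submission
  imports Defs
begin

(* The arclength factor is at most sqrt (1 + L^2), and |gamma t - z_i| >= |t - x_i| where x_i
   is the projection of Re z_i onto [a, b]. The weighted AM-GM inequality with weights
   beta_i / beta gives
     prod_i |t - x_i| powr (-beta_i) <= sum_i (beta_i / beta) * |t - x_i| powr (-beta),
   and as beta < 1 each |t - x_i| powr (-beta) has integral over [a, b] at most
   2 (b - a) powr (1 - beta) / (1 - beta), whatever x_i is. Measurability of deriv y needs an
   argument of its own: for continuous y the set of differentiability points is a countable
   intersection of countable unions of closed sets, by the Cauchy criterion for difference
   quotients. *)

lemma deriv_eq_SOME_False:
  assumes "\<nexists>D. DERIV g t :> D"
  shows "deriv g t = (SOME D::'a::real_normed_field. False)"
  using assms unfolding deriv_def by simp

definition diff_quotient :: "(real \<Rightarrow> real) \<Rightarrow> real \<Rightarrow> real \<Rightarrow> real" where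
  "diff_quotient g t h = (g (t + h) - g t) / h"

lemma DERIV_iff_diff_quotient: "DERIV g t :> D \<longleftrightarrow> (diff_quotient g t \<longlongrightarrow> D) (at 0)"
  unfolding DERIV_def diff_quotient_def ..

definition diff_quotients_close :: "(real \<Rightarrow> real) \<Rightarrow> real \<Rightarrow> real \<Rightarrow> real \<Rightarrow> bool" where
  "diff_quotients_close g t d e \<longleftrightarrow>
    (\<forall>h k. 0 < \<bar>h\<bar> \<and> \<bar>h\<bar> < d \<and> 0 < \<bar>k\<bar> \<and> \<bar>k\<bar> < d \<longrightarrow>
      \<bar>diff_quotient g t h - diff_quotient g t k\<bar> \<le> e)"

lemma diff_quotients_close_mono:
  "diff_quotients_close g t d e \<Longrightarrow> d' \<le> d \<Longrightarrow> e \<le> e' \<Longrightarrow> diff_quotients_close g t d' e'"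
  unfolding diff_quotients_close_def by force

lemma DERIV_exists_iff_Cauchy:
  "(\<exists>D. DERIV g t :> D) \<longleftrightarrow> (\<forall>e>0. \<exists>d>0. diff_quotients_close g t d e)"
proof -
  let ?Q = "diff_quotient g t"
  have "(\<exists>D. DERIV g t :> D) \<longleftrightarrow> convergent_filter (filtermap ?Q (at 0))"
    by (simp add: DERIV_iff_diff_quotient tendsto_def convergent_filter_iff filterlim_def
        le_filter_def)
  also have "\<dots> \<longleftrightarrow> cauchy_filter (filtermap ?Q (at 0))"
    by (rule convergent_filter_iff_cauchy)
  also have "\<dots> \<longleftrightarrow> (\<forall>e>0. \<exists>P. eventually P (at 0) \<and> (\<forall>h k. P h \<and> P k \<longrightarrow> dist (?Q h) (?Q k) < e))"
    by (rule cauchy_filter_metric_filtermap)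
  also have "\<dots> \<longleftrightarrow> (\<forall>e>0. \<exists>d>0. diff_quotients_close g t d e)"
  proof (intro iffI allI impI)
    fix e :: real
    assume "\<forall>e>0. \<exists>P. eventually P (at 0) \<and> (\<forall>h k. P h \<and> P k \<longrightarrow> dist (?Q h) (?Q k) < e)"
      and "e > 0"
    then obtain P where "eventually P (at 0)" and P: "\<forall>h k. P h \<and> P k \<longrightarrow> \<bar>?Q h - ?Q k\<bar> < e"
      by (auto simp: dist_real_def)
    then obtain d where "d > 0" and "\<forall>h. h \<noteq> 0 \<and> \<bar>h\<bar> < d \<longrightarrow> P h"
      by (auto simp: eventually_at dist_real_def)
    with P show "\<exists>d>0. diff_quotients_close g t d e"
      unfolding diff_quotients_close_def by (auto intro!: less_imp_le)
  next
    fix e :: real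
    assume "\<forall>e>0. \<exists>d>0. diff_quotients_close g t d e" and "e > 0"
    then obtain d where "d > 0" and close: "diff_quotients_close g t d (e / 2)"
      by (meson half_gt_zero)
    have "eventually (\<lambda>h. 0 < \<bar>h\<bar> \<and> \<bar>h\<bar> < d) (at 0)"
      using \<open>d > 0\<close> by (auto simp: eventually_at dist_real_def)
    moreover have "\<bar>?Q h - ?Q k\<bar> < e" if "0 < \<bar>h\<bar> \<and> \<bar>h\<bar> < d" "0 < \<bar>k\<bar> \<and> \<bar>k\<bar> < d" for h k
      using close that \<open>e > 0\<close> unfolding diff_quotients_close_def by fastforce
    ultimately show "\<exists>P. eventually P (at 0) \<and> (\<forall>h k. P h \<and> P k \<longrightarrow> dist (?Q h) (?Q k) < e)"
      unfolding dist_real_def by blast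
  qed
  finally show ?thesis .
qed

lemma sets_borel_differentiable_points:
  fixes g :: "real \<Rightarrow> real"
  assumes "continuous_on UNIV g"
  shows "{t. \<exists>D. DERIV g t :> D} \<in> sets borel"
proof -
  define C where "C n m = {t. diff_quotients_close g t (1 / Suc m) (1 / Suc n)}" for n m :: nat
  have "continuous_on UNIV (\<lambda>t. diff_quotient g t h)" for h
  proof -
    have "continuous_on UNIV (\<lambda>t. g (t + h))"
      by (rule continuous_on_compose2[OF assms]) (auto intro!: continuous_intros)
    then show ?thesis
      unfolding diff_quotient_def divide_inverse by (intro continuous_intros assms)
  qed
  then have "closed (C n m)" for n m
    unfolding C_def diff_quotients_close_def
    by (intro closed_Collect_all closed_Collect_imp open_Collect_const closed_Collect_le
        continuous_intros)
  moreover have "(\<forall>e>0. \<exists>d>0. diff_quotients_close g t d e) \<longleftrightarrow> t \<in> (\<Inter>n. \<Union>m. C n m)" for t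
  proof
    assume Cauchy: "\<forall>e>0. \<exists>d>0. diff_quotients_close g t d e"
    have "\<exists>m. t \<in> C n m" for n
    proof -
      obtain d where "d > 0" and "diff_quotients_close g t d (1 / Suc n)"
        using Cauchy[rule_format, of "1 / Suc n"] by auto
      moreover obtain m where "1 / real (Suc m) < d"
        using \<open>d > 0\<close> by (rule nat_approx_posE)
      ultimately show ?thesis
        unfolding C_def by (blast intro: diff_quotients_close_mono less_imp_le)
    qed
    then show "t \<in> (\<Inter>n. \<Union>m. C n m)" by blast
  next
    assume t: "t \<in> (\<Inter>n. \<Union>m. C n m)"
    show "\<forall>e>0. \<exists>d>0. diff_quotients_close g t d e"
    proof (intro allI impI)
      fix e :: real assume "e > 0"
      then obtain n where "1 / real (Suc n) < e"
        by (rule nat_approx_posE)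
      moreover obtain m where "t \<in> C n m"
        using t by blast
      ultimately have "diff_quotients_close g t (1 / Suc m) e"
        unfolding C_def by (auto elim: diff_quotients_close_mono)
      then show "\<exists>d>0. diff_quotients_close g t d e"
        by (intro exI[of _ "1 / Suc m"]) simp
    qed
  qed
  then have "{t. \<exists>D. DERIV g t :> D} = (\<Inter>n. \<Union>m. C n m)"
    by (auto simp: DERIV_exists_iff_Cauchy)
  ultimately show ?thesis
    by (simp add: borel_closed sets.countable_INT sets.countable_UN)
qed

lemma borel_measurable_deriv:
  fixes g :: "real \<Rightarrow> real"
  assumes "continuous_on UNIV g"
  shows "deriv g \<in> borel_measurable borel"
proof -
  define T where "T = {t. \<exists>D. DERIV g t :> D}"
  define u where "u i t = (if t \<in> T then diff_quotient g t (1 / Suc i) else (SOME D. False))"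
    for i :: nat and t
  have "u i \<in> borel_measurable borel" for i
  proof -
    have "continuous_on UNIV (\<lambda>t. g (t + 1 / Suc i))"
      by (rule continuous_on_compose2[OF assms]) (auto intro!: continuous_intros)
    then show ?thesis
      unfolding u_def diff_quotient_def T_def using sets_borel_differentiable_points[OF assms]
      by (intro measurable_If_set borel_measurable_continuous_onI continuous_intros assms) auto
  qed
  moreover have "(\<lambda>i. u i t) \<longlonglongrightarrow> deriv g t" for t
  proof (cases "t \<in> T")
    case True
    then have "(diff_quotient g t \<longlongrightarrow> deriv g t) (at 0)"
      unfolding T_def DERIV_iff_diff_quotient[symmetric]
      using DERIV_deriv_iff_has_field_derivative by blast
    moreover have "filterlim (\<lambda>i::nat. 1 / real (Suc i)) (at 0) sequentially"
      by (rule filterlim_atI) (use LIMSEQ_inverse_real_of_nat in \<open>auto simp: divide_inverse\<close>)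
    ultimately have "(\<lambda>i. diff_quotient g t (1 / Suc i)) \<longlonglongrightarrow> deriv g t"
      by (rule filterlim_compose)
    with True show ?thesis
      by (simp add: u_def)
  next
    case False
    then show ?thesis
      by (simp add: u_def T_def deriv_eq_SOME_False)
  qed
  ultimately show ?thesis
    by (rule borel_measurable_LIMSEQ_real[rotated])
qed

lemma borel_measurable_deriv_on_interval:
  fixes y :: "real \<Rightarrow> real"
  assumes "continuous_on {a..b} y" and "a \<le> b"
  shows "deriv y \<in> borel_measurable (lebesgue_on {a..b})"
proof -
  define y' where "y' t = y (max a (min b t))" for t
  have "continuous_on UNIV y'"
    unfolding y'_def
    by (rule continuous_on_compose2[OF assms(1)]) (use assms(2) in \<open>auto intro!: continuous_intros\<close>)
  then have "deriv y' \<in> borel_measurable (lebesgue_on {a..b})"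
    using measurable_comp[OF id_borel_measurable_lebesgue_on borel_measurable_deriv] by (simp add: o_def)
  then have y'_measurable: "deriv y' measurable_on {a..b}"
    by (simp add: measurable_on_iff_borel_measurable)
  have deriv_eq: "deriv y t = deriv y' t" if "t \<in> {a..b} - {a, b}" for t
  proof (rule deriv_cong_ev)
    have "\<forall>\<^sub>F s in nhds t. s \<in> {a<..<b}"
      using that by (intro eventually_nhds_in_open) auto
    then show "\<forall>\<^sub>F s in nhds t. y s = y' s"
      by eventually_elim (auto simp: y'_def)
  qed simp
  have "deriv y measurable_on {a..b}"
    by (rule measurable_on_spike[of _ _ "{a, b}", OF y'_measurable _ deriv_eq]) simp
  then show ?thesis
    by (simp add: measurable_on_iff_borel_measurable)
qed

lemma abs_DERIV_le_lipschitz: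
  fixes y :: "real \<Rightarrow> real"
  assumes lip: "L-lipschitz_on S y" and t: "t \<in> interior S" and D: "DERIV y t :> D"
  shows "\<bar>D\<bar> \<le> L"
proof (rule tendsto_upperbound)
  show "((\<lambda>h. \<bar>diff_quotient y t h\<bar>) \<longlongrightarrow> \<bar>D\<bar>) (at 0)"
    using D by (intro tendsto_rabs) (simp add: DERIV_iff_diff_quotient)
  obtain e where "e > 0" and "ball t e \<subseteq> S"
    using t by (rule interiorE) (auto simp: open_contains_ball)
  then have "\<forall>\<^sub>F h in at 0. t + h \<in> S"
    unfolding eventually_at by (intro exI[of _ e]) (auto simp: dist_real_def)
  then show "\<forall>\<^sub>F h in at 0. \<bar>diff_quotient y t h\<bar> \<le> L"
  proof eventually_elim
    case (elim h)
    then have "\<bar>y (t + h) - y t\<bar> \<le> L * \<bar>h\<bar>"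
      using lipschitz_onD[OF lip, of "t + h" t] interior_subset t by (auto simp: dist_real_def)
    with lipschitz_on_nonneg[OF lip] show ?case
      by (simp add: diff_quotient_def abs_divide divide_le_eq)
  qed
qed simp

lemma abs_deriv_le_lipschitz:
  fixes y :: "real \<Rightarrow> real"
  assumes "L-lipschitz_on S y" and "t \<in> interior S"
  shows "\<bar>deriv y t\<bar> \<le> max L \<bar>SOME D::real. False\<bar>"
proof (cases "\<exists>D. DERIV y t :> D")
  case True
  then have "DERIV y t :> deriv y t"
    using DERIV_deriv_iff_has_field_derivative by blast
  then show ?thesis
    using abs_DERIV_le_lipschitz[OF assms] by fastforce
next
  case False
  then show ?thesis
    by (simp add: deriv_eq_SOME_False)
qed

lemma weighted_arith_geom_mean:
  fixes w x :: "'i \<Rightarrow> real"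
  assumes "finite I" and w: "\<And>i. i \<in> I \<Longrightarrow> 0 \<le> w i" and "sum w I = 1"
    and x: "\<And>i. i \<in> I \<Longrightarrow> 0 < x i"
  shows "(\<Prod>i\<in>I. x i powr w i) \<le> (\<Sum>i\<in>I. w i * x i)"
proof -
  have "I \<noteq> {}"
    using \<open>sum w I = 1\<close> by auto
  have "(\<Prod>i\<in>I. x i powr w i) = (\<Prod>i\<in>I. exp (w i *\<^sub>R ln (x i)))"
    by (intro prod.cong) (auto simp: powr_def dest: x)
  also have "\<dots> = exp (\<Sum>i\<in>I. w i *\<^sub>R ln (x i))"
    using \<open>finite I\<close> by (simp add: exp_sum)
  also have "\<dots> \<le> (\<Sum>i\<in>I. w i * exp (ln (x i)))"
    using assms \<open>I \<noteq> {}\<close> by (intro convex_on_sum[OF _ _ exp_convex]) auto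
  also have "\<dots> = (\<Sum>i\<in>I. w i * x i)"
    using x by simp
  finally show ?thesis .
qed

lemma prod_inverse_powr_le_weighted_sum:
  fixes b c d :: "'i \<Rightarrow> real"
  assumes "finite I" and "I \<noteq> {}" and b: "\<And>i. i \<in> I \<Longrightarrow> 0 < b i"
    and d: "\<And>i. i \<in> I \<Longrightarrow> 0 < d i" and dc: "\<And>i. i \<in> I \<Longrightarrow> d i \<le> c i"
  defines "\<beta> \<equiv> sum b I"
  shows "(\<Prod>i\<in>I. (1 / c i) powr b i) \<le> (\<Sum>i\<in>I. b i / \<beta> * d i powr - \<beta>)"
proof -
  have "\<beta> > 0"
    unfolding \<beta>_def using assms by (intro sum_pos) auto
  have "(\<Prod>i\<in>I. (1 / c i) powr b i) \<le> (\<Prod>i\<in>I. (d i powr - \<beta>) powr (b i / \<beta>))"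
  proof (intro prod_mono conjI)
    fix i assume i: "i \<in> I"
    have "(1 / c i) powr b i \<le> (1 / d i) powr b i"
      using b[OF i] d[OF i] dc[OF i] by (intro powr_mono2 frac_le) auto
    also have "\<dots> = d i powr - b i"
      using d[OF i] by (simp add: powr_minus_divide powr_divide)
    also have "\<dots> = (d i powr - \<beta>) powr (b i / \<beta>)"
      using \<open>\<beta> > 0\<close> by (simp add: powr_powr)
    finally show "(1 / c i) powr b i \<le> (d i powr - \<beta>) powr (b i / \<beta>)" .
  qed simp
  also have "\<dots> \<le> (\<Sum>i\<in>I. b i / \<beta> * d i powr - \<beta>)"
  proof (rule weighted_arith_geom_mean)
    show "(\<Sum>i\<in>I. b i / \<beta>) = 1"
      using \<open>\<beta> > 0\<close> by (simp add: \<beta>_def sum_divide_distrib[symmetric])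
    fix i assume "i \<in> I"
    then show "0 \<le> b i / \<beta>" and "0 < d i powr - \<beta>"
      using b[of i] d[of i] \<open>\<beta> > 0\<close> by auto
  qed fact
  finally show ?thesis .
qed

lemma abs_diff_powr_has_integral:
  fixes p x R :: real
  assumes "0 \<le> p" "p < 1" "0 \<le> R"
  shows "((\<lambda>t. \<bar>t - x\<bar> powr - p) has_integral 2 * R powr (1 - p) / (1 - p)) {x - R..x + R}"
proof -
  have "((\<lambda>s. s powr - p) has_integral R powr (- p + 1) / (- p + 1)) {0..R}"
    using assms by (intro has_integral_powr_from_0) auto
  then have "((\<lambda>s. s powr - p) has_integral R powr (1 - p) / (1 - p)) {0..R}"
    by (simp add: add.commute)
  then have right: "((\<lambda>s. \<bar>s\<bar> powr - p) has_integral R powr (1 - p) / (1 - p)) {0..R}"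
    by (rule has_integral_eq[rotated]) auto
  then have left: "((\<lambda>s. \<bar>s\<bar> powr - p) has_integral R powr (1 - p) / (1 - p)) {-R..0}"
    using has_integral_reflect_real[where f = "\<lambda>s. \<bar>s\<bar> powr - p" and a = 0 and b = R] by simp
  have "((\<lambda>s. \<bar>s\<bar> powr - p) has_integral 2 * R powr (1 - p) / (1 - p)) {-R..R}"
    using has_integral_combine[OF _ _ left right] \<open>0 \<le> R\<close> by simp
  then have "(((\<lambda>t. \<bar>t - x\<bar> powr - p) \<circ> (\<lambda>s. x + s)) has_integral 2 * R powr (1 - p) / (1 - p))
      (cbox (-R) R)"
    by (simp add: o_def)
  then have "((\<lambda>t. \<bar>t - x\<bar> powr - p) has_integral 2 * R powr (1 - p) / (1 - p))
      (cbox (-R + x) (R + x))"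
    by (rule has_integral_shift_cbox_iff[THEN iffD1])
  then show ?thesis
    by (simp add: algebra_simps)
qed

lemma abs_diff_powr_integral_le:
  fixes p x a b :: real
  assumes "0 \<le> p" "p < 1" and x: "x \<in> {a..b}"
  shows "(\<lambda>t. \<bar>t - x\<bar> powr - p) integrable_on {a..b}"
    and "integral {a..b} (\<lambda>t. \<bar>t - x\<bar> powr - p) \<le> 2 * (b - a) powr (1 - p) / (1 - p)"
proof -
  have big: "((\<lambda>t. \<bar>t - x\<bar> powr - p) has_integral 2 * (b - a) powr (1 - p) / (1 - p))
      {x - (b - a)..x + (b - a)}"
    using assms by (intro abs_diff_powr_has_integral) auto
  have sub: "{a..b} \<subseteq> {x - (b - a)..x + (b - a)}"
    using x by auto
  then show int: "(\<lambda>t. \<bar>t - x\<bar> powr - p) integrable_on {a..b}"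
    using integrable_on_subinterval[OF has_integral_integrable[OF big]] by simp
  have "integral {a..b} (\<lambda>t. \<bar>t - x\<bar> powr - p)
      \<le> integral {x - (b - a)..x + (b - a)} (\<lambda>t. \<bar>t - x\<bar> powr - p)"
    using sub int has_integral_integrable[OF big] by (intro integral_subset_le) auto
  then show "integral {a..b} (\<lambda>t. \<bar>t - x\<bar> powr - p) \<le> 2 * (b - a) powr (1 - p) / (1 - p)"
    using integral_unique[OF big] by simp
qed

lemma integral_weighted_sum_le:
  fixes g :: "'i \<Rightarrow> 'a::euclidean_space \<Rightarrow> real"
  assumes "finite I" and w: "\<And>i. i \<in> I \<Longrightarrow> 0 \<le> w i" and "sum w I \<le> 1" and "0 \<le> K"
    and g: "\<And>i. i \<in> I \<Longrightarrow> g i integrable_on S" and K: "\<And>i. i \<in> I \<Longrightarrow> integral S (g i) \<le> K"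
  shows "(\<lambda>t. \<Sum>i\<in>I. w i * g i t) integrable_on S"
    and "integral S (\<lambda>t. \<Sum>i\<in>I. w i * g i t) \<le> K"
proof -
  have wg: "(\<lambda>t. w i * g i t) integrable_on S" if "i \<in> I" for i
    using g[OF that] by (rule integrable_on_mult_right)
  then show "(\<lambda>t. \<Sum>i\<in>I. w i * g i t) integrable_on S"
    by (rule integrable_sum[OF \<open>finite I\<close>])
  have "integral S (\<lambda>t. \<Sum>i\<in>I. w i * g i t) = (\<Sum>i\<in>I. w i * integral S (g i))"
    using wg \<open>finite I\<close> by (simp add: integral_sum)
  also have "\<dots> \<le> (\<Sum>i\<in>I. w i * K)"
    using w K by (intro sum_mono mult_left_mono) auto
  also have "\<dots> \<le> K"
    using \<open>sum w I \<le> 1\<close> \<open>0 \<le> K\<close> sum_nonneg[of I w] w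
    by (simp add: sum_distrib_right[symmetric] mult_left_le_one_le)
  finally show "integral S (\<lambda>t. \<Sum>i\<in>I. w i * g i t) \<le> K" .
qed

lemma integrable_dominated_ae:
  fixes f g :: "'a::euclidean_space \<Rightarrow> real"
  assumes f: "f \<in> borel_measurable (lebesgue_on S)" and S: "S \<in> sets lebesgue"
    and g: "g integrable_on S" and N: "negligible N" and le: "\<And>t. t \<in> S - N \<Longrightarrow> \<bar>f t\<bar> \<le> g t"
  shows "f integrable_on S" and "integral S f \<le> integral S g"
proof -
  define G where "G t = (if t \<in> N then \<bar>f t\<bar> else g t)" for t
  have G: "G integrable_on S"
    by (rule integrable_spike[OF g N]) (simp add: G_def)
  have fG: "norm (f t) \<le> G t" if "t \<in> S" for t
    using le[of t] that by (auto simp: G_def)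
  show f_int: "f integrable_on S"
    by (rule measurable_bounded_by_integrable_imp_integrable[OF f G fG S])
  have "integral S f \<le> integral S G"
    using fG by (intro integral_le[OF f_int G]) force
  also have "\<dots> = integral S g"
    by (rule integral_spike[OF N]) (simp add: G_def)
  finally show "integral S f \<le> integral S g" .
qed

lemma borel_measurable_arc_integrand:
  fixes y :: "real \<Rightarrow> real" and z :: "'i \<Rightarrow> complex"
  assumes "continuous_on {a..b} y" and "a \<le> b"
  shows "(\<lambda>t. (\<Prod>i\<in>I. (1 / cmod (Complex t (y t) - z i)) powr bs i) * sqrt (1 + (deriv y t)\<^sup>2))
    \<in> borel_measurable (lebesgue_on {a..b})"
proof -
  have [measurable]: "deriv y \<in> borel_measurable (lebesgue_on {a..b})"
    using assms by (rule borel_measurable_deriv_on_interval)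
  have "continuous_on {a..b} (\<lambda>t. Complex t (y t) - z i)" for i
    using assms(1) by (simp add: Complex_eq continuous_intros)
  then have [measurable]: "(\<lambda>t. cmod (Complex t (y t) - z i)) \<in> borel_measurable (lebesgue_on {a..b})"
    for i by (intro continuous_imp_measurable_on_sets_lebesgue continuous_on_norm) auto
  show ?thesis
    by measurable
qed

(* The summand 1 dominates the empty product, for which sum bs I = 0. *)
definition singular_majorant :: "'i set \<Rightarrow> ('i \<Rightarrow> real) \<Rightarrow> ('i \<Rightarrow> real) \<Rightarrow> real \<Rightarrow> real" where
  "singular_majorant I bs x t = 1 + (\<Sum>i\<in>I. bs i / sum bs I * \<bar>t - x i\<bar> powr - sum bs I)"

lemma prod_inverse_cmod_powr_le_singular_majorant:
  fixes w :: complex and z :: "'i \<Rightarrow> complex"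
  assumes "finite I" and bs: "\<And>i. i \<in> I \<Longrightarrow> 0 < bs i"
    and "\<And>i. i \<in> I \<Longrightarrow> 0 < \<bar>Re w - x i\<bar>"
    and closer: "\<And>i. i \<in> I \<Longrightarrow> \<bar>Re w - x i\<bar> \<le> \<bar>Re w - Re (z i)\<bar>"
  shows "(\<Prod>i\<in>I. (1 / cmod (w - z i)) powr bs i) \<le> singular_majorant I bs x (Re w)"
proof (cases "I = {}")
  case False
  have "\<bar>Re w - x i\<bar> \<le> cmod (w - z i)" if "i \<in> I" for i
    using closer[OF that] abs_Re_le_cmod[of "w - z i"] by simp
  with False assms have "(\<Prod>i\<in>I. (1 / cmod (w - z i)) powr bs i)
      \<le> (\<Sum>i\<in>I. bs i / sum bs I * \<bar>Re w - x i\<bar> powr - sum bs I)"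
    by (intro prod_inverse_powr_le_weighted_sum) auto
  then show ?thesis
    unfolding singular_majorant_def by linarith
qed (simp add: singular_majorant_def)

lemma singular_majorant_integral_le:
  fixes x :: "'i \<Rightarrow> real"
  assumes "finite I" and bs: "\<And>i. i \<in> I \<Longrightarrow> 0 < bs i" and "sum bs I < 1"
    and x: "\<And>i. x i \<in> {a..b}"
  shows "singular_majorant I bs x integrable_on {a..b}"
    and "integral {a..b} (singular_majorant I bs x)
      \<le> (b - a) + 2 * (b - a) powr (1 - sum bs I) / (1 - sum bs I)"
proof -
  define \<beta> where "\<beta> = sum bs I"
  define K where "K = 2 * (b - a) powr (1 - \<beta>) / (1 - \<beta>)"
  have "0 \<le> \<beta>"
    unfolding \<beta>_def using bs by (metis less_imp_le sum_nonneg)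
  have "a \<le> b"
    using x by fastforce
  have "(\<lambda>t. \<bar>t - x i\<bar> powr - \<beta>) integrable_on {a..b}"
    and "integral {a..b} (\<lambda>t. \<bar>t - x i\<bar> powr - \<beta>) \<le> K" for i
    unfolding K_def using \<open>0 \<le> \<beta>\<close> \<open>sum bs I < 1\<close> x
    by (intro abs_diff_powr_integral_le; simp add: \<beta>_def)+
  moreover have "(\<Sum>i\<in>I. bs i / \<beta>) \<le> 1"
    by (cases "\<beta> = 0") (auto simp: \<beta>_def sum_divide_distrib[symmetric])
  moreover have "0 \<le> K"
    unfolding K_def \<beta>_def using \<open>sum bs I < 1\<close> \<open>a \<le> b\<close> by simp
  ultimately have sum_int: "(\<lambda>t. \<Sum>i\<in>I. bs i / \<beta> * \<bar>t - x i\<bar> powr - \<beta>) integrable_on {a..b}"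
    and sum_le: "integral {a..b} (\<lambda>t. \<Sum>i\<in>I. bs i / \<beta> * \<bar>t - x i\<bar> powr - \<beta>) \<le> K"
    using integral_weighted_sum_le[OF \<open>finite I\<close>, where w = "\<lambda>i. bs i / \<beta>" and K = K
        and g = "\<lambda>i t. \<bar>t - x i\<bar> powr - \<beta>" and S = "{a..b}"] bs \<open>0 \<le> \<beta>\<close>
    by (simp_all add: less_imp_le)
  have majorant: "singular_majorant I bs x = (\<lambda>t. 1 + (\<Sum>i\<in>I. bs i / \<beta> * \<bar>t - x i\<bar> powr - \<beta>))"
    by (simp add: singular_majorant_def \<beta>_def fun_eq_iff)
  show "singular_majorant I bs x integrable_on {a..b}"
    unfolding majorant by (intro integrable_add integrable_const_ivl sum_int)
  have "integral {a..b} (singular_majorant I bs x)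
      = (b - a) + integral {a..b} (\<lambda>t. \<Sum>i\<in>I. bs i / \<beta> * \<bar>t - x i\<bar> powr - \<beta>)"
    unfolding majorant by (subst integral_add[OF integrable_const_ivl sum_int]) (use \<open>a \<le> b\<close> in simp)
  with sum_le show "integral {a..b} (singular_majorant I bs x) \<le> (b - a) + 2 * (b - a) powr (1 - sum bs I) / (1 - sum bs I)"
    by (simp add: K_def \<beta>_def)
qed

(* SOME D. False is the value of deriv y where y is not differentiable; lacking Rademacher's theorem,
   these points cannot be discarded as a null set, so the bound has to cover this junk value. *)
definition singular_arc_bound :: "real \<Rightarrow> real \<Rightarrow> real \<Rightarrow> real \<Rightarrow> real" where
  "singular_arc_bound L a b \<beta> =
    sqrt (1 + (max L \<bar>SOME D::real. False\<bar>)\<^sup>2) * ((b - a) + 2 * (b - a) powr (1 - \<beta>) / (1 - \<beta>))"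

lemma lipschitz_arc_singular_integral_le:
  fixes y :: "real \<Rightarrow> real" and z :: "'i \<Rightarrow> complex" and bs :: "'i \<Rightarrow> real"
  assumes "a \<le> b" and lip: "L-lipschitz_on {a..b} y"
    and "finite I" and bs: "\<And>i. i \<in> I \<Longrightarrow> 0 < bs i" and "sum bs I < 1"
  defines "f \<equiv> \<lambda>t. (\<Prod>i\<in>I. (1 / cmod (Complex t (y t) - z i)) powr bs i) * sqrt (1 + (deriv y t)\<^sup>2)"
  shows "f integrable_on {a..b}" and "integral {a..b} f \<le> singular_arc_bound L a b (sum bs I)"
proof -
  define M where "M = max L \<bar>SOME D::real. False\<bar>"
  \<comment> \<open>Clamping keeps x i in [a, b] while only decreasing the distance to points of [a, b].\<close>
  define x where "x i = max a (min b (Re (z i)))" for i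
  define g where "g t = sqrt (1 + M\<^sup>2) * singular_majorant I bs x t" for t
  have "x i \<in> {a..b}" for i
    using \<open>a \<le> b\<close> by (auto simp: x_def)
  note majorant = singular_majorant_integral_le[where x = x, OF \<open>finite I\<close> bs \<open>sum bs I < 1\<close> this]
  have f_le: "\<bar>f t\<bar> \<le> g t" if t: "t \<in> {a..b} - ({a, b} \<union> x ` I)" for t
  proof -
    have P_le: "(\<Prod>i\<in>I. (1 / cmod (Complex t (y t) - z i)) powr bs i) \<le> singular_majorant I bs x t"
      using prod_inverse_cmod_powr_le_singular_majorant[OF \<open>finite I\<close> bs,
          where w = "Complex t (y t)" and x = x and z = z] t
      by (force simp: x_def)
    have "\<bar>deriv y t\<bar> \<le> M"
      unfolding M_def using t by (intro abs_deriv_le_lipschitz[OF lip]) auto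
    then have "(deriv y t)\<^sup>2 \<le> M\<^sup>2"
      by (metis abs_ge_zero power2_abs power_mono)
    then have sqrt_le: "sqrt (1 + (deriv y t)\<^sup>2) \<le> sqrt (1 + M\<^sup>2)"
      by simp
    have P_nonneg: "0 \<le> (\<Prod>i\<in>I. (1 / cmod (Complex t (y t) - z i)) powr bs i)"
      by (simp add: prod_nonneg)
    have "f t \<le> singular_majorant I bs x t * sqrt (1 + M\<^sup>2)"
      unfolding f_def by (rule mult_mono[OF P_le sqrt_le]) (use P_nonneg P_le in auto)
    with P_nonneg show ?thesis
      by (simp add: f_def g_def mult.commute)
  qed
  have f_meas: "f \<in> borel_measurable (lebesgue_on {a..b})"
    unfolding f_def using lipschitz_on_continuous_on[OF lip] \<open>a \<le> b\<close>
    by (rule borel_measurable_arc_integrand)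
  have g_int: "g integrable_on {a..b}"
    unfolding g_def using majorant(1) by (rule integrable_on_mult_right)
  have "negligible ({a, b} \<union> x ` I)"
    using \<open>finite I\<close> by (simp add: negligible_finite)
  note dominated = integrable_dominated_ae[OF f_meas _ g_int this f_le]
  show "f integrable_on {a..b}"
    using dominated(1) by simp
  have "integral {a..b} g \<le> singular_arc_bound L a b (sum bs I)"
    unfolding g_def M_def singular_arc_bound_def using majorant(2) by (simp add: mult_left_mono)
  with dominated(2) show "integral {a..b} f \<le> singular_arc_bound L a b (sum bs I)"
    by simp
qed

theorem lemma2p8:
  fixes L a b \<beta> :: real
  assumes "a < b"
  shows "\<exists>C::real. \<forall>(y::real \<Rightarrow> real) (m::nat) (z::nat \<Rightarrow> complex) (bs::nat \<Rightarrow> real).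
           L-lipschitz_on {a..b} y \<longrightarrow>
           (\<forall>i\<in>{1..m}. bs i > 0) \<longrightarrow>
           (\<Sum>i=1..m. bs i) = \<beta> \<longrightarrow> \<beta> < 1 \<longrightarrow>
           (let \<gamma> = (\<lambda>t. Complex t (y t));
                f = (\<lambda>t. (\<Prod>i=1..m. (1 / cmod (\<gamma> t - z i)) powr (bs i)) * sqrt (1 + (deriv y t)\<^sup>2))
            in f integrable_on {a..b} \<and> integral {a..b} f < C)"
  apply (intro exI[of _ "singular_arc_bound L a b \<beta> + 1"] allI impI)
  subgoal for y m z bs
    using lipschitz_arc_singular_integral_le[of a b L y "{1..m}" bs z] assms
    by (simp add: Let_def)
  done

end
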